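(* Let $(g,q,w)$ be an $m\times n$ absorbing game with all entries of $g,q,w$ rational and with deterministic transitions, i.e. $q_{ij}\in\{0,1\}$ for all $(i,j)$. If $\min(m,n)<3$, then the limit value $v=\lim_{\lambda\to0}v_\lambda$ is a rational number. *)

theory Defs
  imports "HOL-Analysis.Analysis"
begin

definition mixed_strats :: "nat \<Rightarrow> (nat \<Rightarrow> real) set" where
  "mixed_strats k = {x. (\<forall>i<k. 0 \<le> x i) \<and> (\<Sum>i<k. x i) = 1 \<and> (\<forall>i\<ge>k. x i = 0)}"

definition bil :: "nat \<Rightarrow> nat \<Rightarrow> (nat \<Rightarrow> nat \<Rightarrow> real) \<Rightarrow> (nat \<Rightarrow> real) \<Rightarrow> (nat \<Rightarrow> real) \<Rightarrow> real" where
  "bil m n A x y = (\<Sum>i<m. \<Sum>j<n. x i * y j * A i j)"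

definition mval :: "nat \<Rightarrow> nat \<Rightarrow> (nat \<Rightarrow> nat \<Rightarrow> real) \<Rightarrow> real" where
  "mval m n A = (SUP x\<in>mixed_strats m. INF y\<in>mixed_strats n. bil m n A x y)"

text \<open>Shapley operator of the absorbing game (g,q,w) with discount factor l:
  stage payoff g; with probability q the game is absorbed, and payoff w is received forever after.\<close>
definition shapley :: "nat \<Rightarrow> nat \<Rightarrow> (nat \<Rightarrow> nat \<Rightarrow> real) \<Rightarrow> (nat \<Rightarrow> nat \<Rightarrow> real) \<Rightarrow>
    (nat \<Rightarrow> nat \<Rightarrow> real) \<Rightarrow> real \<Rightarrow> real \<Rightarrow> real" where
  "shapley m n g q w l v =
     mval m n (\<lambda>i j. l * g i j + (1 - l) * (q i j * w i j + (1 - q i j) * v))"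

definition disc_val :: "nat \<Rightarrow> nat \<Rightarrow> (nat \<Rightarrow> nat \<Rightarrow> real) \<Rightarrow> (nat \<Rightarrow> nat \<Rightarrow> real) \<Rightarrow>
    (nat \<Rightarrow> nat \<Rightarrow> real) \<Rightarrow> real \<Rightarrow> real" where
  "disc_val m n g q w l = (THE v. v = shapley m n g q w l v)"

end

theory Submission
  imports Defs
begin

text \<open>
  If one player has at most two actions, the value of a matrix game is the maximum of the lower
  envelope of finitely many lines, so it is either an entry of the matrix or the value
  (a d - b c) / (a + d - b - c) of a 2x2 subgame in which both players mix strictly.
  The discounted value v(l) is the fixed point of the contracting Shapley operator, that is, the
  value of the matrix l g + (1 - l) (q w + (1 - q) v(l)). With deterministic transitions every
  entry of this matrix minus v(l) is l^e times a factor with e \<in> {0, 1}, and as (v, l) tends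
  to (u, 0) these factors tend to y - u, where y is w on absorbing cells and g elsewhere.
  So v(l) can stay close to u only if u is some y(i, j) or the 2x2 formula applied to the y's:
  a strictly mixed 2x2 block satisfies a d = b c, which in the limit either yields that formula
  (when both sides carry the same power of l) or is impossible (when they do not).
  These candidates form a finite set of rationals, and a continuous bounded function that avoids
  every other point converges to one of them.
\<close>

section \<open>Matrix games\<close>

lemma mixed_strats_nonneg: "x \<in> mixed_strats k \<Longrightarrow> 0 \<le> x i"
  unfolding mixed_strats_def by (cases "i < k") auto

lemma mixed_strats_sum: "x \<in> mixed_strats k \<Longrightarrow> (\<Sum>i<k. x i) = 1"
  unfolding mixed_strats_def by auto

lemma mixed_strats_le_one:
  assumes "x \<in> mixed_strats k" shows "x i \<le> 1"
proof (cases "i < k")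
  case True
  then have "x i \<le> (\<Sum>i<k. x i)"
    using assms by (intro member_le_sum) (auto intro: mixed_strats_nonneg)
  then show ?thesis using mixed_strats_sum[OF assms] by simp
qed (use assms in \<open>auto simp: mixed_strats_def\<close>)

lemma mixed_average_le:
  assumes "x \<in> mixed_strats k" "\<forall>i<k. c i \<le> V"
  shows "(\<Sum>i<k. x i * c i) \<le> V"
proof -
  have "(\<Sum>i<k. x i * c i) \<le> (\<Sum>i<k. x i * V)"
    using assms by (intro sum_mono mult_left_mono) (auto intro: mixed_strats_nonneg)
  also have "\<dots> = V" using mixed_strats_sum[OF assms(1)] by (simp add: sum_distrib_right[symmetric])
  finally show ?thesis .
qed

lemma mixed_average_ge:
  assumes "x \<in> mixed_strats k" "\<forall>i<k. V \<le> c i"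
  shows "V \<le> (\<Sum>i<k. x i * c i)"
  using mixed_average_le[OF assms(1), of "\<lambda>i. - c i" "- V"] assms(2)
  by (simp add: sum_negf)

lemma bil_by_rows: "bil m n A x y = (\<Sum>i<m. x i * (\<Sum>j<n. y j * A i j))"
  unfolding bil_def by (simp add: sum_distrib_left algebra_simps)

lemma bil_by_columns: "bil m n A x y = (\<Sum>j<n. y j * (\<Sum>i<m. x i * A i j))"
  unfolding bil_def by (subst sum.swap) (simp add: sum_distrib_left algebra_simps)

lemma bil_ge_neg_sum_abs:
  assumes "x \<in> mixed_strats m" "y \<in> mixed_strats n"
  shows "- (\<Sum>i<m. \<Sum>j<n. \<bar>A i j\<bar>) \<le> bil m n A x y"
proof -
  have "- \<bar>A i j\<bar> \<le> x i * y j * A i j" for i j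
  proof -
    have "0 \<le> x i * y j" "x i * y j \<le> 1"
      using assms by (auto intro: mixed_strats_nonneg mixed_strats_le_one mult_le_one mult_nonneg_nonneg)
    then have "\<bar>x i * y j * A i j\<bar> \<le> \<bar>A i j\<bar>"
      by (simp add: abs_mult mult_left_le_one_le)
    then show ?thesis by linarith
  qed
  then show ?thesis unfolding bil_def by (simp add: sum_negf[symmetric] sum_mono)
qed

definition saddle_value :: "nat \<Rightarrow> nat \<Rightarrow> (nat \<Rightarrow> nat \<Rightarrow> real) \<Rightarrow> real \<Rightarrow> bool" where
  "saddle_value m n A V \<longleftrightarrow> (\<exists>x\<in>mixed_strats m. \<exists>y\<in>mixed_strats n.
     (\<forall>j<n. V \<le> (\<Sum>i<m. x i * A i j)) \<and> (\<forall>i<m. (\<Sum>j<n. y j * A i j) \<le> V))"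

lemma mval_eq_saddle_value:
  assumes "saddle_value m n A V"
  shows "mval m n A = V"
proof -
  obtain x0 y0 where x0: "x0 \<in> mixed_strats m" and y0: "y0 \<in> mixed_strats n"
    and guarantee1: "\<forall>j<n. V \<le> (\<Sum>i<m. x0 i * A i j)"
    and guarantee2: "\<forall>i<m. (\<Sum>j<n. y0 j * A i j) \<le> V"
    using assms unfolding saddle_value_def by blast
  have bdd: "bdd_below ((\<lambda>y. bil m n A x y) ` mixed_strats n)" if "x \<in> mixed_strats m" for x
    using bil_ge_neg_sum_abs[OF that, of _ n A] by (intro bdd_belowI2) auto
  have inf_le: "(INF y\<in>mixed_strats n. bil m n A x y) \<le> V" if x: "x \<in> mixed_strats m" for x
  proof -
    have "(INF y\<in>mixed_strats n. bil m n A x y) \<le> bil m n A x y0"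
      by (rule cINF_lower[OF bdd[OF x] y0])
    also have "\<dots> \<le> V"
      unfolding bil_by_rows using guarantee2 by (intro mixed_average_le[OF x]) auto
    finally show ?thesis .
  qed
  have "V \<le> (INF y\<in>mixed_strats n. bil m n A x0 y)"
    using y0 guarantee1 unfolding bil_by_columns
    by (intro cINF_greatest) (auto intro: mixed_average_ge)
  also have "\<dots> \<le> mval m n A"
    unfolding mval_def using x0 inf_le by (intro cSUP_upper bdd_aboveI2) auto
  finally show ?thesis
    unfolding mval_def using x0 inf_le by (intro antisym cSUP_least) auto
qed

lemma saddle_value_mono:
  assumes "saddle_value m n A a" "saddle_value m n B b"
    and "\<forall>i<m. \<forall>j<n. A i j \<le> B i j + d"
  shows "a \<le> b + d"
proof -
  obtain x where x: "x \<in> mixed_strats m" "\<forall>j<n. a \<le> (\<Sum>i<m. x i * A i j)"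
    using assms(1) unfolding saddle_value_def by blast
  obtain y where y: "y \<in> mixed_strats n" "\<forall>i<m. (\<Sum>j<n. y j * B i j) \<le> b"
    using assms(2) unfolding saddle_value_def by blast
  have "(\<Sum>j<n. y j * A i j) \<le> b + d" if "i < m" for i
  proof -
    have "(\<Sum>j<n. y j * A i j) \<le> (\<Sum>j<n. y j * (B i j + d))"
      using assms(3) that y(1) by (intro sum_mono mult_left_mono) (auto intro: mixed_strats_nonneg)
    also have "\<dots> = (\<Sum>j<n. y j * B i j) + d"
      using mixed_strats_sum[OF y(1)] by (simp add: ring_distribs sum.distrib sum_distrib_right[symmetric])
    finally show ?thesis using y(2) that by force
  qed
  then have "bil m n A x y \<le> b + d"
    unfolding bil_by_rows by (intro mixed_average_le[OF x(1)]) auto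
  moreover have "a \<le> bil m n A x y"
    unfolding bil_by_columns using x by (intro mixed_average_ge[OF y(1)]) auto
  ultimately show ?thesis by linarith
qed

lemma saddle_value_transpose:
  assumes "saddle_value m n A V"
  shows "saddle_value n m (\<lambda>j i. - A i j) (- V)"
  using assms unfolding saddle_value_def by (auto simp: sum_negf)

definition equalizing_2x2 :: "(nat \<Rightarrow> nat \<Rightarrow> real) \<Rightarrow> nat \<Rightarrow> nat \<Rightarrow> nat \<Rightarrow> nat \<Rightarrow> real \<Rightarrow> bool" where
  "equalizing_2x2 A i k j j' V \<longleftrightarrow> (\<exists>t s. 0 < t \<and> t < 1 \<and> 0 < s \<and> s < 1 \<and>
     t * A i j + (1 - t) * A k j = V \<and> t * A i j' + (1 - t) * A k j' = V \<and>
     s * A i j + (1 - s) * A i j' = V \<and> s * A k j + (1 - s) * A k j' = V)"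

definition entry_or_2x2_value :: "nat \<Rightarrow> nat \<Rightarrow> (nat \<Rightarrow> nat \<Rightarrow> real) \<Rightarrow> real \<Rightarrow> bool" where
  "entry_or_2x2_value m n A V \<longleftrightarrow>
     (\<exists>i<m. \<exists>j<n. A i j = V) \<or> (\<exists>i<m. \<exists>k<m. \<exists>j<n. \<exists>j'<n. equalizing_2x2 A i k j j' V)"

lemma equalizing_2x2_transpose:
  assumes "equalizing_2x2 A i k j j' V"
  shows "equalizing_2x2 (\<lambda>j i. - A i j) j j' i k (- V)"
proof -
  obtain t s where "0 < t" "t < 1" "0 < s" "s < 1"
    "t * A i j + (1 - t) * A k j = V" "t * A i j' + (1 - t) * A k j' = V"
    "s * A i j + (1 - s) * A i j' = V" "s * A k j + (1 - s) * A k j' = V"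
    using assms unfolding equalizing_2x2_def by blast
  then show ?thesis unfolding equalizing_2x2_def
    by (intro exI[of _ s] exI[of _ t]) (auto simp: algebra_simps)
qed

lemma entry_or_2x2_value_transpose:
  assumes "entry_or_2x2_value m n A V"
  shows "entry_or_2x2_value n m (\<lambda>j i. - A i j) (- V)"
  using assms unfolding entry_or_2x2_value_def
proof (elim disjE exE conjE)
  fix i k j j' assume "i < m" "k < m" "j < n" "j' < n" "equalizing_2x2 A i k j j' V"
  then show "(\<exists>j<n. \<exists>i<m. - A i j = - V) \<or>
    (\<exists>j<n. \<exists>j'<n. \<exists>i<m. \<exists>k<m. equalizing_2x2 (\<lambda>j i. - A i j) j j' i k (- V))"
    using equalizing_2x2_transpose by blast
qed auto

definition checkerboard :: "real \<Rightarrow> real \<Rightarrow> real \<Rightarrow> real \<Rightarrow> bool" where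
  "checkerboard a b c d \<longleftrightarrow> a * b < 0 \<and> a * c < 0 \<and> b * d < 0 \<and> c * d < 0"

lemma checkerboard_same_signs:
  assumes "checkerboard a b c d" "0 < a * a'" "0 < b * b'" "0 < c * c'" "0 < d * d'"
  shows "checkerboard a' b' c' d'"
  using assms unfolding checkerboard_def by (auto simp: zero_less_mult_iff mult_less_0_iff)

lemma equalizing_zero_sum_2x2:
  fixes a b c d t s :: real
  assumes "0 < t" "t < 1" "0 < s" "s < 1"
    and "t * a + (1 - t) * c = 0" "t * b + (1 - t) * d = 0" "s * a + (1 - s) * b = 0"
  shows "a * d = b * c" and "a \<noteq> 0 \<Longrightarrow> checkerboard a b c d"
proof -
  define \<tau> \<sigma> where "\<tau> = t / (1 - t)" and "\<sigma> = s / (1 - s)"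
  have pos: "0 < \<tau>" "0 < \<sigma>" unfolding \<tau>_def \<sigma>_def using assms(1-4) by auto
  have c: "c = - \<tau> * a" and d: "d = - \<tau> * b" and b: "b = - \<sigma> * a"
    unfolding \<tau>_def \<sigma>_def using assms by (simp_all add: field_simps)
  show "a * d = b * c" unfolding c d by simp
  assume "a \<noteq> 0"
  moreover have "b \<noteq> 0" using \<open>a \<noteq> 0\<close> pos unfolding b by simp
  ultimately have "0 < a * a" "0 < b * b" by (auto simp: zero_less_mult_iff linorder_neq_iff)
  then show "checkerboard a b c d"
    unfolding checkerboard_def c d b using pos
    by (simp add: algebra_simps mult_less_0_iff zero_less_mult_iff)
qed

lemma equalizing_2x2_cross:
  assumes "equalizing_2x2 A i k j j' V"
  shows "(A i j - V) * (A k j' - V) = (A i j' - V) * (A k j - V)"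
    and "A i j \<noteq> V \<Longrightarrow> checkerboard (A i j - V) (A i j' - V) (A k j - V) (A k j' - V)"
proof -
  obtain t s where ts: "0 < t" "t < 1" "0 < s" "s < 1"
    "t * A i j + (1 - t) * A k j = V" "t * A i j' + (1 - t) * A k j' = V"
    "s * A i j + (1 - s) * A i j' = V"
    using assms unfolding equalizing_2x2_def by blast
  have "t * (A i j - V) + (1 - t) * (A k j - V) = 0" "t * (A i j' - V) + (1 - t) * (A k j' - V) = 0"
    "s * (A i j - V) + (1 - s) * (A i j' - V) = 0"
    using ts(5-7) by (simp_all add: algebra_simps)
  note zero_sum = equalizing_zero_sum_2x2[OF ts(1-4) this]
  show "(A i j - V) * (A k j' - V) = (A i j' - V) * (A k j - V)" by (rule zero_sum(1))
  show "A i j \<noteq> V \<Longrightarrow> checkerboard (A i j - V) (A i j' - V) (A k j - V) (A k j' - V)"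
    by (rule zero_sum(2)) simp
qed

lemma equalizing_2x2_checkerboard_signs:
  assumes "equalizing_2x2 A i k j j' V"
    and "0 < (A i j - V) * z i j" "0 < (A i j' - V) * z i j'"
    and "0 < (A k j - V) * z k j" "0 < (A k j' - V) * z k j'"
  shows "checkerboard (z i j) (z i j') (z k j) (z k j')"
proof -
  have "A i j \<noteq> V" using assms(2) by auto
  with assms(1) have "checkerboard (A i j - V) (A i j' - V) (A k j - V) (A k j' - V)"
    by (rule equalizing_2x2_cross(2))
  then show ?thesis using assms(2-5) by (rule checkerboard_same_signs)
qed

definition mixed_value_2x2 :: "real \<Rightarrow> real \<Rightarrow> real \<Rightarrow> real \<Rightarrow> real" where
  "mixed_value_2x2 a b c d = (a * d - b * c) / (a + d - b - c)"

lemma mixed_value_2x2_eq: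
  assumes "checkerboard (a - u) (b - u) (c - u) (d - u)"
    and "(a - u) * (d - u) = (b - u) * (c - u)"
  shows "u = mixed_value_2x2 a b c d"
proof -
  have "a + d - b - c \<noteq> 0"
    using assms(1) unfolding checkerboard_def by (auto simp: mult_less_0_iff)
  moreover have "u * (a + d - b - c) = a * d - b * c" using assms(2) by (simp add: algebra_simps)
  ultimately show ?thesis unfolding mixed_value_2x2_def by (simp add: field_simps)
qed

section \<open>Matrix games in which one player has at most two actions\<close>

lemma continuous_on_Min_image:
  fixes f :: "'i \<Rightarrow> 'a::topological_space \<Rightarrow> 'b::linorder_topology"
  assumes "finite K" "K \<noteq> {}" "\<And>k. k \<in> K \<Longrightarrow> continuous_on S (f k)"
  shows "continuous_on S (\<lambda>t. Min ((\<lambda>k. f k t) ` K))"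
  using assms
proof (induction K rule: finite_ne_induct)
  case (insert k K)
  have "continuous_on S (\<lambda>t. min (f k t) (Min ((\<lambda>k. f k t) ` K)))"
    using insert by (intro continuous_on_min) auto
  then show ?case using insert by (simp add: Min_insert)
qed simp

lemma lower_envelope_attains_max:
  fixes P Q :: "nat \<Rightarrow> real"
  assumes "1 \<le> n"
  shows "\<exists>t0 V. 0 \<le> t0 \<and> t0 \<le> 1 \<and> (\<forall>k<n. V \<le> t0 * P k + (1 - t0) * Q k) \<and>
    (\<forall>t. 0 \<le> t \<and> t \<le> 1 \<longrightarrow> (\<exists>k<n. t * P k + (1 - t) * Q k \<le> V))"
proof -
  define \<psi> where "\<psi> t = Min ((\<lambda>k. t * P k + (1 - t) * Q k) ` {..<n})" for t
  have nonempty: "{..<n} \<noteq> {}" using assms lessThan_empty_iff by simp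
  have "continuous_on {0..1} \<psi>"
    unfolding \<psi>_def using nonempty by (intro continuous_on_Min_image continuous_intros) auto
  moreover have "{0..1::real} \<noteq> {}" by simp
  ultimately obtain t0 where t0: "t0 \<in> {0..1}" and max: "\<forall>t\<in>{0..1}. \<psi> t \<le> \<psi> t0"
    using continuous_attains_sup[OF compact_Icc] by blast
  have "\<exists>k<n. t * P k + (1 - t) * Q k = \<psi> t" for t
  proof -
    have "\<psi> t \<in> (\<lambda>k. t * P k + (1 - t) * Q k) ` {..<n}"
      unfolding \<psi>_def using nonempty by (intro Min_in) auto
    then show ?thesis by force
  qed
  moreover have "\<psi> t0 \<le> t0 * P k + (1 - t0) * Q k" if "k < n" for k
    unfolding \<psi>_def using that by (intro Min_le) auto
  ultimately show ?thesis
    using t0 max by (intro exI[of _ t0] exI[of _ "\<psi> t0"]) (metis atLeastAtMost_iff)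
qed

lemma lower_envelope_right_active:
  fixes P Q :: "nat \<Rightarrow> real"
  assumes "t0 < 1"
    and above: "\<forall>k<n. V \<le> t0 * P k + (1 - t0) * Q k"
    and below: "\<forall>t. t0 < t \<and> t < 1 \<longrightarrow> (\<exists>k<n. t * P k + (1 - t) * Q k \<le> V)"
  shows "\<exists>k<n. t0 * P k + (1 - t0) * Q k = V \<and> P k \<le> Q k"
proof (rule ccontr)
  define lin where "lin k t = t * P k + (1 - t) * Q k" for k t
  assume "\<not> ?thesis"
  then have rising: "Q k < P k" if "k < n" "lin k t0 = V" for k
    using that unfolding lin_def by force
  have "\<forall>\<^sub>F t in at_right t0. V < lin k t" if k: "k < n" for k
  proof (cases "lin k t0 = V")
    case True
    then have "lin k t = V + (t - t0) * (P k - Q k)" for t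
      unfolding lin_def by (simp add: algebra_simps)
    then show ?thesis
      using rising[OF k True] by (auto simp: eventually_at_right_field intro!: exI[of _ "t0 + 1"])
  next
    case False
    then have "V < lin k t0" using above k unfolding lin_def by force
    moreover have "(lin k \<longlongrightarrow> lin k t0) (at_right t0)"
      unfolding lin_def by (intro tendsto_intros)
    ultimately show ?thesis using order_tendstoD(1) by blast
  qed
  then have "\<forall>\<^sub>F t in at_right t0. (\<forall>k\<in>{..<n}. V < lin k t) \<and> t0 < t \<and> t < 1"
    using \<open>t0 < 1\<close> eventually_at_right_less
    by (intro eventually_conj eventually_ball_finite) (auto simp: eventually_at_right_field intro!: exI[of _ 1])
  then obtain t where "\<forall>k<n. V < lin k t" "t0 < t" "t < 1"
    using eventually_happens'[OF trivial_limit_at_right_real] by fastforce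
  then show False using below unfolding lin_def by (meson not_le)
qed

lemma lower_envelope_left_active:
  fixes P Q :: "nat \<Rightarrow> real"
  assumes "0 < t0"
    and above: "\<forall>k<n. V \<le> t0 * P k + (1 - t0) * Q k"
    and below: "\<forall>t. 0 < t \<and> t < t0 \<longrightarrow> (\<exists>k<n. t * P k + (1 - t) * Q k \<le> V)"
  shows "\<exists>k<n. t0 * P k + (1 - t0) * Q k = V \<and> Q k \<le> P k"
proof -
  have "\<exists>k<n. (1 - t0) * Q k + (1 - (1 - t0)) * P k = V \<and> Q k \<le> P k"
  proof (rule lower_envelope_right_active)
    show "\<forall>t. 1 - t0 < t \<and> t < 1 \<longrightarrow> (\<exists>k<n. t * Q k + (1 - t) * P k \<le> V)"
    proof (intro allI impI)
      fix t assume "1 - t0 < t \<and> t < 1"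
      then obtain k where "k < n" "(1 - t) * P k + (1 - (1 - t)) * Q k \<le> V"
        using below[rule_format, of "1 - t"] by auto
      then show "\<exists>k<n. t * Q k + (1 - t) * P k \<le> V" by (auto simp: algebra_simps)
    qed
  qed (use assms in \<open>auto simp: algebra_simps\<close>)
  then show ?thesis by (simp add: algebra_simps)
qed

lemma crossing_lines_mixture:
  fixes pj qj pk qk t V :: real
  assumes "pj < qj" "qk < pk"
    and "t * pj + (1 - t) * qj = V" "t * pk + (1 - t) * qk = V"
  shows "\<exists>s. 0 < s \<and> s < 1 \<and> s * pj + (1 - s) * pk = V \<and> s * qj + (1 - s) * qk = V"
proof -
  define s where "s = (pk - qk) / ((pk - qk) + (qj - pj))"
  have s: "0 < s" "s < 1" unfolding s_def using assms(1,2) by (auto simp: divide_less_eq)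
  have balance: "s * (pj - qj) + (1 - s) * (pk - qk) = 0"
    unfolding s_def using assms(1,2) by (simp add: field_simps)
  have "s * pj + (1 - s) * pk = s * (t * pj + (1 - t) * qj) + (1 - s) * (t * pk + (1 - t) * qk)
      + (1 - t) * (s * (pj - qj) + (1 - s) * (pk - qk))"
    and "s * qj + (1 - s) * qk = s * (t * pj + (1 - t) * qj) + (1 - s) * (t * pk + (1 - t) * qk)
      - t * (s * (pj - qj) + (1 - s) * (pk - qk))"
    by (simp_all add: algebra_simps)
  then have "s * pj + (1 - s) * pk = s * V + (1 - s) * V" "s * qj + (1 - s) * qk = s * V + (1 - s) * V"
    unfolding assms(3,4) balance by simp_all
  then show ?thesis using s by (intro exI[of _ s]) (simp add: algebra_simps)
qed

lemma lower_envelope_max_cases: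
  fixes P Q :: "nat \<Rightarrow> real"
  assumes t0: "0 \<le> t0" "t0 \<le> 1"
    and above: "\<forall>k<n. V \<le> t0 * P k + (1 - t0) * Q k"
    and below: "\<forall>t. 0 \<le> t \<and> t \<le> 1 \<longrightarrow> (\<exists>k<n. t * P k + (1 - t) * Q k \<le> V)"
  shows "(\<exists>k<n. P k \<le> V \<and> Q k \<le> V) \<or>
    (\<exists>j<n. \<exists>k<n. \<exists>s. 0 < s \<and> s < 1 \<and> 0 < t0 \<and> t0 < 1 \<and>
        t0 * P j + (1 - t0) * Q j = V \<and> t0 * P k + (1 - t0) * Q k = V \<and>
        s * P j + (1 - s) * P k = V \<and> s * Q j + (1 - s) * Q k = V)"
proof -
  have right: "\<exists>k<n. t0 * P k + (1 - t0) * Q k = V \<and> P k \<le> Q k" if "t0 < 1"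
    using that above below t0 by (intro lower_envelope_right_active) auto
  have left: "\<exists>k<n. t0 * P k + (1 - t0) * Q k = V \<and> Q k \<le> P k" if "0 < t0"
    using that above below t0 by (intro lower_envelope_left_active) auto
  consider "t0 = 0" | "t0 = 1" | "0 < t0" "t0 < 1" using t0 by linarith
  then show ?thesis
  proof cases
    case 1
    then show ?thesis using right by force
  next
    case 2
    then show ?thesis using left by force
  next
    case 3
    obtain j where j: "j < n" "t0 * P j + (1 - t0) * Q j = V" "P j \<le> Q j" using right 3 by blast
    obtain k where k: "k < n" "t0 * P k + (1 - t0) * Q k = V" "Q k \<le> P k" using left 3 by blast
    show ?thesis
    proof (cases "P j = Q j \<or> P k = Q k")
      case True
      have "t0 * x + (1 - t0) * x = x" for x :: real by (simp add: algebra_simps)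
      then show ?thesis using True j k by (metis order_refl)
    next
      case False
      then obtain s where "0 < s" "s < 1" "s * P j + (1 - s) * P k = V" "s * Q j + (1 - s) * Q k = V"
        using crossing_lines_mixture[of "P j" "Q j" "Q k" "P k" t0 V] j k by force
      then show ?thesis using 3 j k by blast
    qed
  qed
qed

definition mix2 :: "real \<Rightarrow> nat \<Rightarrow> nat \<Rightarrow> nat \<Rightarrow> real" where
  "mix2 t a b i = (if i = a then t else 0) + (if i = b then 1 - t else 0)"

lemma mix2_mixed_strats: "a < k \<Longrightarrow> b < k \<Longrightarrow> 0 \<le> t \<Longrightarrow> t \<le> 1 \<Longrightarrow> mix2 t a b \<in> mixed_strats k"
  unfolding mixed_strats_def mix2_def by (auto simp: sum.distrib)

lemma sum_mix2: "a < k \<Longrightarrow> b < k \<Longrightarrow> (\<Sum>i<k. mix2 t a b i * c i) = t * c a + (1 - t) * c b"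
  unfolding mix2_def by (simp add: ring_distribs sum.distrib if_distrib[of "\<lambda>x. x * _"] cong: if_cong)

lemma saddle_value_two_rows:
  assumes rows: "\<And>i. i < m \<Longrightarrow> i = a \<or> i = b"
    and ab: "a < m" "b < m" and t: "0 \<le> t" "t \<le> 1"
    and above: "\<forall>j<n. V \<le> t * A a j + (1 - t) * A b j"
    and y: "y \<in> mixed_strats n" "(\<Sum>j<n. y j * A a j) \<le> V" "(\<Sum>j<n. y j * A b j) \<le> V"
  shows "saddle_value m n A V"
proof -
  have "mix2 t a b \<in> mixed_strats m"
    using ab t by (rule mix2_mixed_strats)
  moreover have "\<forall>j<n. V \<le> (\<Sum>i<m. mix2 t a b i * A i j)"
    using above by (simp add: sum_mix2[OF ab])
  moreover have "\<forall>i<m. (\<Sum>j<n. y j * A i j) \<le> V"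
    using rows y(2,3) by blast
  ultimately show ?thesis using y(1) unfolding saddle_value_def by blast
qed

lemma two_row_game_value:
  assumes "1 \<le> m" "m \<le> 2" "1 \<le> n"
  shows "\<exists>V. saddle_value m n A V \<and> entry_or_2x2_value m n A V"
proof -
  define P Q where "P = A 0" and "Q = A (m - 1)" \<comment> \<open>the same row if \<open>m = 1\<close>\<close>
  have rows: "i = 0 \<or> i = m - 1" if "i < m" for i using that assms by auto
  have last_row: "0 < m" "m - 1 < m" using assms by auto
  obtain t0 V where t0: "0 \<le> t0" "t0 \<le> 1"
    and above: "\<forall>k<n. V \<le> t0 * P k + (1 - t0) * Q k"
    and below: "\<forall>t. 0 \<le> t \<and> t \<le> 1 \<longrightarrow> (\<exists>k<n. t * P k + (1 - t) * Q k \<le> V)"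
    using lower_envelope_attains_max[OF assms(3)] by blast
  note saddle = saddle_value_two_rows[OF rows last_row t0 above[unfolded P_def Q_def],
      folded P_def Q_def]
  from lower_envelope_max_cases[OF t0 above below] show ?thesis
  proof (elim disjE exE conjE)
    fix k assume k: "k < n" "P k \<le> V" "Q k \<le> V"
    have "P k = V \<or> Q k = V"
    proof (rule ccontr)
      assume "\<not> ?thesis"
      then have "t0 * P k + (1 - t0) * Q k < V"
        using k t0 by (intro convex_bound_lt) auto
      then show False using above k(1) by force
    qed
    then have "entry_or_2x2_value m n A V"
      unfolding entry_or_2x2_value_def P_def Q_def using k(1) last_row by blast
    moreover have "saddle_value m n A V"
      using k by (intro saddle[of "mix2 1 k k"]) (auto simp: mix2_mixed_strats sum_mix2)
    ultimately show ?thesis by blast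
  next
    fix j k s assume jk: "j < n" "k < n" "0 < s" "s < 1" "0 < t0" "t0 < 1"
      "t0 * P j + (1 - t0) * Q j = V" "t0 * P k + (1 - t0) * Q k = V"
      "s * P j + (1 - s) * P k = V" "s * Q j + (1 - s) * Q k = V"
    then have "equalizing_2x2 A 0 (m - 1) j k V"
      unfolding equalizing_2x2_def P_def Q_def by blast
    then have "entry_or_2x2_value m n A V"
      unfolding entry_or_2x2_value_def using jk(1,2) last_row by blast
    moreover have "saddle_value m n A V"
      using jk by (intro saddle[of "mix2 s j k"]) (auto simp: mix2_mixed_strats sum_mix2)
    ultimately show ?thesis by blast
  qed
qed

theorem small_game_value:
  assumes "1 \<le> m" "1 \<le> n" "min m n < 3"
  shows "saddle_value m n A (mval m n A) \<and> entry_or_2x2_value m n A (mval m n A)"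
proof -
  obtain V where V: "saddle_value m n A V" "entry_or_2x2_value m n A V"
  proof (cases "m \<le> 2")
    case True
    then show ?thesis using two_row_game_value[of m n A] assms that by blast
  next
    case False
    with assms(3) have "n \<le> 2" by simp
    then obtain V where "saddle_value n m (\<lambda>j i. - A i j) V" "entry_or_2x2_value n m (\<lambda>j i. - A i j) V"
      using two_row_game_value[of n m "\<lambda>j i. - A i j"] assms by auto
    then show ?thesis
      using that[of "- V"] saddle_value_transpose entry_or_2x2_value_transpose by fastforce
  qed
  then show ?thesis using mval_eq_saddle_value by simp
qed

section \<open>Limits\<close>

lemma eventually_ne_power_mult:
  fixes X Y h :: "'a \<Rightarrow> real"
  assumes "(X \<longlongrightarrow> x) F" "(Y \<longlongrightarrow> y) F" "(h \<longlongrightarrow> 0) F" "\<forall>\<^sub>F p in F. 0 < h p"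
    and "x \<noteq> y" "x \<noteq> 0" "y \<noteq> 0"
  shows "\<forall>\<^sub>F p in F. h p ^ e1 * X p \<noteq> h p ^ e2 * Y p"
proof -
  have ne: "\<forall>\<^sub>F p in F. X' p \<noteq> h p ^ d * Y' p"
    if "(X' \<longlongrightarrow> x') F" "(Y' \<longlongrightarrow> y') F" "x' \<noteq> 0 ^ d * y'" for X' Y' x' y' d
  proof -
    have "((\<lambda>p. X' p - h p ^ d * Y' p) \<longlongrightarrow> x' - 0 ^ d * y') F"
      using that assms(3) by (intro tendsto_intros)
    moreover have "x' - 0 ^ d * y' \<noteq> 0" using that(3) by simp
    ultimately have "\<forall>\<^sub>F p in F. X' p - h p ^ d * Y' p \<noteq> 0" by (rule tendsto_imp_eventually_ne)
    then show ?thesis by (rule eventually_mono) simp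
  qed
  have "x \<noteq> 0 ^ d * y" "y \<noteq> 0 ^ d * x" for d :: nat
    using assms(5-7) by (cases d; simp)+
  then have "\<forall>\<^sub>F p in F. X p \<noteq> h p ^ (e2 - e1) * Y p \<and> Y p \<noteq> h p ^ (e1 - e2) * X p"
    using ne assms(1,2) by (intro eventually_conj) auto
  with assms(4) show ?thesis
  proof eventually_elim
    case (elim p)
    show ?case
    proof (cases "e1 \<le> e2")
      case True
      then have "h p ^ e2 * Y p = h p ^ e1 * (h p ^ (e2 - e1) * Y p)"
        by (simp add: power_add[symmetric])
      then show ?thesis using elim by auto
    next
      case False
      then have "h p ^ e1 * X p = h p ^ e2 * (h p ^ (e1 - e2) * X p)"
        by (simp add: power_add[symmetric])
      then show ?thesis using elim by auto
    qed
  qed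
qed

lemma tendsto_ident_prod_at_right:
  "((\<lambda>p. p) \<longlongrightarrow> (u, 0)) (nhds u \<times>\<^sub>F at_right (0::real))"
proof -
  have "nhds u \<times>\<^sub>F at_right 0 \<le> nhds (u, 0::real)"
    unfolding nhds_prod by (intro prod_filter_mono order_refl at_within_le_nhds)
  then show ?thesis by (rule tendsto_mono) (rule filterlim_ident)
qed

lemma eventually_above_or_below:
  fixes f :: "real \<Rightarrow> real"
  assumes "0 < d" "continuous_on {0<..<d} f" "\<forall>\<^sub>F l in at_right 0. f l \<noteq> u"
  shows "(\<forall>\<^sub>F l in at_right 0. u < f l) \<or> (\<forall>\<^sub>F l in at_right 0. f l < u)"
proof -
  obtain b where b: "0 < b" "\<forall>l>0. l < b \<longrightarrow> f l \<noteq> u"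
    using assms(3) unfolding eventually_at_right_field by blast
  define \<delta> where "\<delta> = min b d"
  have connected: "connected (f ` {0<..<\<delta>})"
    unfolding \<delta>_def by (intro connected_continuous_image continuous_on_subset[OF assms(2)]) auto
  have "u \<notin> f ` {0<..<\<delta>}" using b unfolding \<delta>_def by auto
  have "(\<forall>l\<in>{0<..<\<delta>}. u < f l) \<or> (\<forall>l\<in>{0<..<\<delta>}. f l < u)"
  proof (rule ccontr)
    assume "\<not> ?thesis"
    then obtain l1 l2 where "l1 \<in> {0<..<\<delta>}" "l2 \<in> {0<..<\<delta>}" "f l1 \<le> u" "u \<le> f l2"
      by (auto simp: not_less)
    then show False
      using connectedD_interval[OF connected, of "f l1" "f l2" u] \<open>u \<notin> _\<close> by blast
  qed
  moreover have "0 < \<delta>" unfolding \<delta>_def using b assms(1) by simp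
  ultimately show ?thesis
    unfolding eventually_at_right_field by auto
qed

lemma tendsto_Sup_of_eventually_sides:
  fixes f :: "'a \<Rightarrow> real"
  assumes "F \<noteq> bot" "finite C"
    and bounded: "\<forall>\<^sub>F x in F. \<bar>f x\<bar> \<le> R"
    and sides: "\<And>u. u \<notin> C \<Longrightarrow> (\<forall>\<^sub>F x in F. u < f x) \<or> (\<forall>\<^sub>F x in F. f x < u)"
  shows "(f \<longlongrightarrow> Sup {u. \<forall>\<^sub>F x in F. u < f x}) F"
proof -
  define A where "A = {u. \<forall>\<^sub>F x in F. u < f x}"
  have "- R - 1 \<in> A" unfolding A_def using bounded by (auto elim: eventually_mono)
  then have A_nonempty: "A \<noteq> {}" by blast
  have "u \<le> R" if "u \<in> A" for u
  proof -
    have "\<forall>\<^sub>F x in F. u < f x" using that unfolding A_def by simp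
    then have "\<forall>\<^sub>F x in F. u < f x \<and> \<bar>f x\<bar> \<le> R"
      using bounded by (rule eventually_conj)
    then show ?thesis using eventually_happens'[OF assms(1)] by fastforce
  qed
  then have A_bdd: "bdd_above A" by (rule bdd_aboveI)
  show ?thesis
    unfolding A_def[symmetric]
  proof (rule tendstoI)
    fix e :: real assume "0 < e"
    then obtain a where a: "a \<in> A" "Sup A - e < a"
      using less_cSup_iff[OF A_nonempty A_bdd, of "Sup A - e"] by auto
    have "infinite {Sup A<..<Sup A + e}" using \<open>0 < e\<close> by (intro infinite_Ioo) simp
    then have "\<not> {Sup A<..<Sup A + e} \<subseteq> C" using finite_subset assms(2) by blast
    then obtain u where "u \<in> {Sup A<..<Sup A + e}" "u \<notin> C" by blast
    then have u: "Sup A < u" "u < Sup A + e" "u \<notin> C" by auto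
    have "u \<notin> A" using cSup_upper[OF _ A_bdd] u(1) by force
    then have "\<forall>\<^sub>F x in F. f x < u" using sides[OF u(3)] unfolding A_def by blast
    moreover have "\<forall>\<^sub>F x in F. a < f x" using a(1) unfolding A_def by blast
    ultimately show "\<forall>\<^sub>F x in F. dist (f x) (Sup A) < e"
      by eventually_elim (use a(2) u(2) in \<open>auto simp: dist_real_def abs_less_iff\<close>)
  qed
qed

lemma tendsto_at_right_finite_set:
  fixes f :: "real \<Rightarrow> real" and C :: "real set"
  assumes "0 < d" "continuous_on {0<..<d} f" "finite C"
    and bounded: "\<forall>\<^sub>F l in at_right 0. \<bar>f l\<bar> \<le> R"
    and avoids: "\<And>u. u \<notin> C \<Longrightarrow> \<exists>\<eta>>0. \<forall>\<^sub>F l in at_right 0. \<eta> \<le> \<bar>f l - u\<bar>"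
  shows "\<exists>c\<in>C. (f \<longlongrightarrow> c) (at_right 0)"
proof -
  have "(\<forall>\<^sub>F l in at_right 0. u < f l) \<or> (\<forall>\<^sub>F l in at_right 0. f l < u)" if u: "u \<notin> C" for u
  proof (rule eventually_above_or_below[OF assms(1,2)])
    obtain \<eta> where "\<eta> > 0" "\<forall>\<^sub>F l in at_right 0. \<eta> \<le> \<bar>f l - u\<bar>" using avoids[OF u] by blast
    then show "\<forall>\<^sub>F l in at_right 0. f l \<noteq> u" by (auto elim: eventually_mono)
  qed
  then obtain c where lim: "(f \<longlongrightarrow> c) (at_right 0)"
    using tendsto_Sup_of_eventually_sides[OF trivial_limit_at_right_real assms(3) bounded] by blast
  moreover have "c \<in> C"
  proof (rule ccontr)
    assume "c \<notin> C"
    then obtain \<eta> where "\<eta> > 0" and far: "\<forall>\<^sub>F l in at_right 0. \<eta> \<le> \<bar>f l - c\<bar>"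
      using avoids by blast
    have "\<forall>\<^sub>F l in at_right 0. \<bar>f l - c\<bar> < \<eta>"
      using tendstoD[OF lim \<open>\<eta> > 0\<close>] by (simp add: dist_real_def)
    with far have "\<forall>\<^sub>F l in at_right (0::real). False" by eventually_elim simp
    then show False by (simp add: trivial_limit_at_right_real)
  qed
  ultimately show ?thesis by blast
qed

section \<open>Absorbing games\<close>

lemma abs_convex_comb_le:
  fixes t x y R :: real
  assumes "0 \<le> t" "t \<le> 1" "\<bar>x\<bar> \<le> R" "\<bar>y\<bar> \<le> R"
  shows "\<bar>t * x + (1 - t) * y\<bar> \<le> R"
proof -
  have "\<bar>t * x + (1 - t) * y\<bar> \<le> t * \<bar>x\<bar> + (1 - t) * \<bar>y\<bar>"
    using assms(1,2) by (metis abs_mult abs_of_nonneg abs_triangle_ineq diff_ge_0_iff_ge)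
  also have "\<dots> \<le> R" using assms by (intro convex_bound_le) auto
  finally show ?thesis .
qed

locale absorbing_game =
  fixes m n :: nat and g q w :: "nat \<Rightarrow> nat \<Rightarrow> real"
  assumes minimax: "\<And>A. saddle_value m n A (mval m n A)"
    \<comment> \<open>von Neumann's theorem, proved here only for games with a two-action player\<close>
    and q_range: "\<And>i j. i < m \<Longrightarrow> j < n \<Longrightarrow> 0 \<le> q i j \<and> q i j \<le> 1"
begin

lemma mval_dist_le:
  assumes "\<forall>i<m. \<forall>j<n. \<bar>A i j - B i j\<bar> \<le> d"
  shows "\<bar>mval m n A - mval m n B\<bar> \<le> d"
proof -
  have "mval m n A \<le> mval m n B + d" "mval m n B \<le> mval m n A + d"
    using assms by (intro saddle_value_mono[OF minimax minimax]; force simp: abs_le_iff)+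
  then show ?thesis by linarith
qed

lemma mval_const: "mval m n (\<lambda>_ _. c) = c"
proof -
  obtain x y where "x \<in> mixed_strats m" "y \<in> mixed_strats n"
    using minimax[of "\<lambda>_ _. c"] unfolding saddle_value_def by blast
  then have "saddle_value m n (\<lambda>_ _. c) c"
    unfolding saddle_value_def using mixed_strats_sum by (auto simp: sum_distrib_right[symmetric])
  then show ?thesis by (rule mval_eq_saddle_value)
qed

lemma mval_abs_le: "\<forall>i<m. \<forall>j<n. \<bar>A i j\<bar> \<le> R \<Longrightarrow> \<bar>mval m n A\<bar> \<le> R"
  using mval_dist_le[of A "\<lambda>_ _. 0" R] by (simp add: mval_const)

definition shapley_matrix :: "real \<Rightarrow> real \<Rightarrow> nat \<Rightarrow> nat \<Rightarrow> real" where
  "shapley_matrix l v i j = l * g i j + (1 - l) * (q i j * w i j + (1 - q i j) * v)"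

lemma shapley_eq_mval: "shapley m n g q w l v = mval m n (shapley_matrix l v)"
  unfolding shapley_def shapley_matrix_def[abs_def] ..

definition payoff_bound :: real where
  "payoff_bound = (\<Sum>i<m. \<Sum>j<n. \<bar>g i j\<bar> + \<bar>w i j\<bar>)"

lemma payoff_bound_nonneg: "0 \<le> payoff_bound"
  unfolding payoff_bound_def by (intro sum_nonneg) auto

lemma payoff_bound_ge:
  assumes "i < m" "j < n"
  shows "\<bar>g i j\<bar> \<le> payoff_bound" "\<bar>w i j\<bar> \<le> payoff_bound"
proof -
  have "\<bar>g i j\<bar> + \<bar>w i j\<bar> \<le> (\<Sum>j<n. \<bar>g i j\<bar> + \<bar>w i j\<bar>)"
    using assms by (intro member_le_sum) auto
  also have "\<dots> \<le> payoff_bound"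
    unfolding payoff_bound_def using assms
    by (intro member_le_sum[where f = "\<lambda>i. \<Sum>j<n. \<bar>g i j\<bar> + \<bar>w i j\<bar>"]) (auto intro: sum_nonneg)
  finally show "\<bar>g i j\<bar> \<le> payoff_bound" "\<bar>w i j\<bar> \<le> payoff_bound" by auto
qed

lemma continuation_abs_le:
  assumes "i < m" "j < n" "\<bar>v\<bar> \<le> payoff_bound"
  shows "\<bar>q i j * w i j + (1 - q i j) * v\<bar> \<le> payoff_bound"
  using assms q_range payoff_bound_ge by (intro abs_convex_comb_le) auto

lemma shapley_matrix_abs_le:
  assumes "0 \<le> l" "l \<le> 1" "\<bar>v\<bar> \<le> payoff_bound" "i < m" "j < n"
  shows "\<bar>shapley_matrix l v i j\<bar> \<le> payoff_bound"
  unfolding shapley_matrix_def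
  by (rule abs_convex_comb_le) (use assms payoff_bound_ge continuation_abs_le in auto)

lemma shapley_nonexpansive:
  assumes "0 \<le> l" "l \<le> 1"
  shows "\<bar>shapley m n g q w l a - shapley m n g q w l b\<bar> \<le> (1 - l) * \<bar>a - b\<bar>"
  unfolding shapley_eq_mval
proof (intro mval_dist_le allI impI)
  fix i j assume "i < m" "j < n"
  then have "(1 - q i j) * \<bar>a - b\<bar> \<le> \<bar>a - b\<bar>"
    using q_range by (intro mult_left_le_one_le) auto
  then have "(1 - l) * ((1 - q i j) * \<bar>a - b\<bar>) \<le> (1 - l) * \<bar>a - b\<bar>"
    using assms by (intro mult_left_mono) auto
  moreover have "shapley_matrix l a i j - shapley_matrix l b i j = (1 - l) * ((1 - q i j) * (a - b))"
    unfolding shapley_matrix_def by (simp add: algebra_simps)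
  then have "\<bar>shapley_matrix l a i j - shapley_matrix l b i j\<bar> = (1 - l) * ((1 - q i j) * \<bar>a - b\<bar>)"
    using assms q_range[OF \<open>i < m\<close> \<open>j < n\<close>] by (simp add: abs_mult)
  ultimately show "\<bar>shapley_matrix l a i j - shapley_matrix l b i j\<bar> \<le> (1 - l) * \<bar>a - b\<bar>"
    by simp
qed

lemma disc_val_fixed_point:
  assumes "0 < l" "l \<le> 1"
  shows "disc_val m n g q w l = shapley m n g q w l (disc_val m n g q w l)"
    and "\<bar>disc_val m n g q w l\<bar> \<le> payoff_bound"
proof -
  let ?T = "shapley m n g q w l" and ?R = payoff_bound
  have contraction: "dist (?T a) (?T b) \<le> (1 - l) * dist a b" for a b
    using shapley_nonexpansive assms by (simp add: dist_real_def)
  have "\<bar>?T v\<bar> \<le> ?R" if "\<bar>v\<bar> \<le> ?R" for v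
    unfolding shapley_eq_mval using assms that by (intro mval_abs_le allI impI shapley_matrix_abs_le) auto
  then have "?T ` {- ?R..?R} \<subseteq> {- ?R..?R}"
    by (force simp: abs_le_iff)
  then obtain v where v: "v \<in> {- ?R..?R}" "?T v = v"
    using Banach_fix[of "{- ?R..?R}" "1 - l" ?T] contraction assms payoff_bound_nonneg
    by (auto simp: complete_eq_closed)
  have unique: "x = v" if "x = ?T x" for x
  proof -
    have "\<bar>x - v\<bar> \<le> (1 - l) * \<bar>x - v\<bar>"
      using contraction[of x v] that v(2) by (simp add: dist_real_def)
    then show ?thesis using assms by (simp add: algebra_simps mult_le_0_iff)
  qed
  have "disc_val m n g q w l = v"
    unfolding disc_val_def using v(2) unique by (intro the_equality) auto
  then show "disc_val m n g q w l = ?T (disc_val m n g q w l)" "\<bar>disc_val m n g q w l\<bar> \<le> ?R"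
    using v by auto
qed

lemma shapley_matrix_dist_le:
  assumes "0 \<le> \<mu>" "\<mu> \<le> 1" "\<bar>x\<bar> \<le> payoff_bound" "i < m" "j < n"
  shows "\<bar>shapley_matrix l x i j - shapley_matrix \<mu> y i j\<bar>
    \<le> 2 * payoff_bound * \<bar>l - \<mu>\<bar> + (1 - \<mu>) * \<bar>x - y\<bar>"
proof -
  let ?c = "q i j * w i j + (1 - q i j) * x"
  have "shapley_matrix l x i j - shapley_matrix \<mu> y i j
      = (l - \<mu>) * (g i j - ?c) + (1 - \<mu>) * ((1 - q i j) * (x - y))"
    unfolding shapley_matrix_def by (simp add: algebra_simps)
  moreover have "\<bar>g i j - ?c\<bar> \<le> 2 * payoff_bound"
    using payoff_bound_ge[OF assms(4,5)] continuation_abs_le[OF assms(4,5,3)] by linarith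
  then have "\<bar>(l - \<mu>) * (g i j - ?c)\<bar> \<le> 2 * payoff_bound * \<bar>l - \<mu>\<bar>"
    by (simp add: abs_mult mult_left_mono mult.commute)
  moreover have "\<bar>(1 - \<mu>) * ((1 - q i j) * (x - y))\<bar> \<le> (1 - \<mu>) * \<bar>x - y\<bar>"
    using assms q_range[OF assms(4,5)] by (simp add: abs_mult mult_left_le_one_le mult_left_mono)
  ultimately show ?thesis by (smt (verit) abs_triangle_ineq)
qed

lemma disc_val_dist_le:
  assumes "0 < l" "l \<le> 1" "0 < \<mu>" "\<mu> \<le> 1"
  shows "\<mu> * \<bar>disc_val m n g q w l - disc_val m n g q w \<mu>\<bar> \<le> 2 * payoff_bound * \<bar>l - \<mu>\<bar>"
proof -
  let ?x = "disc_val m n g q w l" and ?y = "disc_val m n g q w \<mu>"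
  have "\<bar>?x - ?y\<bar> = \<bar>mval m n (shapley_matrix l ?x) - mval m n (shapley_matrix \<mu> ?y)\<bar>"
    using disc_val_fixed_point(1) assms by (metis shapley_eq_mval)
  also have "\<dots> \<le> 2 * payoff_bound * \<bar>l - \<mu>\<bar> + (1 - \<mu>) * \<bar>?x - ?y\<bar>"
    using assms disc_val_fixed_point(2)[of l]
    by (intro mval_dist_le allI impI shapley_matrix_dist_le) auto
  finally show ?thesis by (simp add: algebra_simps)
qed

lemma continuous_on_disc_val: "continuous_on {0<..1} (disc_val m n g q w)"
  unfolding continuous_on_def
proof
  fix \<mu> :: real assume "\<mu> \<in> {0<..1}"
  then have \<mu>: "0 < \<mu>" "\<mu> \<le> 1" by auto
  show "(disc_val m n g q w \<longlongrightarrow> disc_val m n g q w \<mu>) (at \<mu> within {0<..1})"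
  proof (rule LIM_zero_cancel, rule Lim_null_comparison)
    show "\<forall>\<^sub>F l in at \<mu> within {0<..1}.
        norm (disc_val m n g q w l - disc_val m n g q w \<mu>) \<le> 2 * payoff_bound / \<mu> * \<bar>l - \<mu>\<bar>"
      unfolding eventually_at_filter
      using disc_val_dist_le \<mu> by (intro always_eventually) (auto simp: field_simps)
    show "((\<lambda>l. 2 * payoff_bound / \<mu> * \<bar>l - \<mu>\<bar>) \<longlongrightarrow> 0) (at \<mu> within {0<..1})"
      by (rule tendsto_eq_intros refl | simp)+
  qed
qed

end

section \<open>Deterministic absorbing games with a two-action player\<close>

locale deterministic_small_game =
  fixes m n :: nat and g q w :: "nat \<Rightarrow> nat \<Rightarrow> real"
  assumes rows_pos: "1 \<le> m" and columns_pos: "1 \<le> n" and small: "min m n < 3"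
    and deterministic: "\<And>i j. i < m \<Longrightarrow> j < n \<Longrightarrow> q i j = 0 \<or> q i j = 1"

sublocale deterministic_small_game \<subseteq> absorbing_game
  using small_game_value rows_pos columns_pos small deterministic by unfold_locales force+

context deterministic_small_game
begin

definition limit_payoff :: "nat \<Rightarrow> nat \<Rightarrow> real" where
  "limit_payoff i j = (if q i j = 1 then w i j else g i j)"

definition candidates :: "real set" where
  "candidates = (\<lambda>(i, j). limit_payoff i j) ` ({..<m} \<times> {..<n}) \<union>
     (\<lambda>(i, k, j, j'). mixed_value_2x2 (limit_payoff i j) (limit_payoff i j') (limit_payoff k j) (limit_payoff k j'))
       ` ({..<m} \<times> {..<m} \<times> {..<n} \<times> {..<n})"

lemma finite_candidates: "finite candidates"
  unfolding candidates_def by auto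

lemma limit_payoff_in_candidates: "i < m \<Longrightarrow> j < n \<Longrightarrow> limit_payoff i j \<in> candidates"
  unfolding candidates_def by (intro UnI1 image_eqI[where x = "(i, j)"]) auto

lemma mixed_value_2x2_in_candidates:
  "i < m \<Longrightarrow> k < m \<Longrightarrow> j < n \<Longrightarrow> j' < n \<Longrightarrow>
    mixed_value_2x2 (limit_payoff i j) (limit_payoff i j') (limit_payoff k j) (limit_payoff k j') \<in> candidates"
  unfolding candidates_def by (intro UnI2 image_eqI[where x = "(i, k, j, j')"]) auto

lemma candidates_rational:
  assumes "\<forall>i<m. \<forall>j<n. g i j \<in> \<rat> \<and> q i j \<in> \<rat> \<and> w i j \<in> \<rat>"
  shows "candidates \<subseteq> \<rat>"
proof -
  have "limit_payoff i j \<in> \<rat>" if "i < m" "j < n" for i j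
    using assms that unfolding limit_payoff_def by auto
  then show ?thesis
    unfolding candidates_def mixed_value_2x2_def by (auto intro!: Rats_divide Rats_diff Rats_add Rats_mult)
qed

definition vanishing_order :: "nat \<Rightarrow> nat \<Rightarrow> nat" where
  "vanishing_order i j = (if q i j = 1 then 0 else 1)"

definition normalized_entry :: "real \<Rightarrow> real \<Rightarrow> nat \<Rightarrow> nat \<Rightarrow> real" where
  "normalized_entry v l i j =
     (if q i j = 1 then l * (g i j - v) + (1 - l) * (w i j - v) else g i j - v)"

lemma shapley_matrix_minus_eq:
  assumes "i < m" "j < n"
  shows "shapley_matrix l v i j - v = l ^ vanishing_order i j * normalized_entry v l i j"
  using deterministic[OF assms]
  by (auto simp: shapley_matrix_def vanishing_order_def normalized_entry_def algebra_simps)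

lemma tendsto_normalized_entry:
  "((\<lambda>(v, l). normalized_entry v l i j) \<longlongrightarrow> limit_payoff i j - u) (nhds u \<times>\<^sub>F at_right 0)"
proof -
  have "((\<lambda>p. normalized_entry (fst p) (snd p) i j) \<longlongrightarrow> limit_payoff i j - u) (nhds u \<times>\<^sub>F at_right 0)"
    unfolding normalized_entry_def limit_payoff_def using tendsto_ident_prod_at_right
    by (cases "q i j = 1") (auto intro!: tendsto_eq_intros)
  then show ?thesis by (simp add: case_prod_beta')
qed

lemma eventually_entry_signs:
  assumes "u \<notin> candidates"
  shows "\<forall>\<^sub>F (v, l) in nhds u \<times>\<^sub>F at_right 0.
    0 < l \<and> (\<forall>i<m. \<forall>j<n. 0 < (shapley_matrix l v i j - v) * (limit_payoff i j - u))"
proof -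
  have "\<forall>\<^sub>F (v, l) in nhds u \<times>\<^sub>F at_right 0. 0 < normalized_entry v l i j * (limit_payoff i j - u)"
    if "i < m" "j < n" for i j
  proof -
    have "((\<lambda>(v, l). normalized_entry v l i j * (limit_payoff i j - u))
        \<longlongrightarrow> (limit_payoff i j - u) * (limit_payoff i j - u)) (nhds u \<times>\<^sub>F at_right 0)"
      using tendsto_mult[OF tendsto_normalized_entry tendsto_const] by (simp add: case_prod_beta')
    moreover have "0 < (limit_payoff i j - u) * (limit_payoff i j - u)"
    proof -
      have "limit_payoff i j \<noteq> u" using limit_payoff_in_candidates[OF that] assms by auto
      then show ?thesis by (auto simp: zero_less_mult_iff linorder_neq_iff)
    qed
    ultimately show ?thesis
      using order_tendstoD(1) by (fastforce simp: case_prod_beta')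
  qed
  then have "\<forall>\<^sub>F (v, l) in nhds u \<times>\<^sub>F at_right 0.
      \<forall>i\<in>{..<m}. \<forall>j\<in>{..<n}. 0 < normalized_entry v l i j * (limit_payoff i j - u)"
    by (simp add: case_prod_beta' eventually_ball_finite)
  moreover have "\<forall>\<^sub>F (v, l) in nhds u \<times>\<^sub>F at_right (0::real). 0 < l"
    unfolding eventually_prod_filter
    using eventually_at_right_less[of "0::real"]
    by (intro exI[of _ "\<lambda>_. True"] exI[of _ "\<lambda>l::real. 0 < l"]) auto
  ultimately show ?thesis
  proof eventually_elim
    case (elim p)
    then show ?case
      by (auto simp: case_prod_beta' shapley_matrix_minus_eq mult.assoc)
  qed
qed

lemma equalizing_2x2_normalized_cross:
  assumes "equalizing_2x2 (shapley_matrix l v) i k j j' v" "i < m" "k < m" "j < n" "j' < n"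
  shows "l ^ (vanishing_order i j + vanishing_order k j') * (normalized_entry v l i j * normalized_entry v l k j')
    = l ^ (vanishing_order i j' + vanishing_order k j) * (normalized_entry v l i j' * normalized_entry v l k j)"
  using equalizing_2x2_cross(1)[OF assms(1)] assms(2-5)
  by (simp add: shapley_matrix_minus_eq power_add ac_simps)

lemma eventually_not_equalizing_2x2:
  assumes u: "u \<notin> candidates" and idx: "i < m" "k < m" "j < n" "j' < n"
  shows "\<forall>\<^sub>F (v, l) in nhds u \<times>\<^sub>F at_right 0. \<not> equalizing_2x2 (shapley_matrix l v) i k j j' v"
proof -
  define z where "z a b = limit_payoff a b - u" for a b
  define N where "N p a b = normalized_entry (fst p) (snd p) a b" for p :: "real \<times> real" and a b
  let ?F = "nhds u \<times>\<^sub>F at_right (0::real)"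
  let ?eq = "\<lambda>p. equalizing_2x2 (shapley_matrix (snd p) (fst p)) i k j j' (fst p)"
  have signs: "\<forall>\<^sub>F p in ?F. 0 < snd p \<and>
      (\<forall>a<m. \<forall>b<n. 0 < (shapley_matrix (snd p) (fst p) a b - fst p) * z a b)"
    using eventually_entry_signs[OF u] unfolding z_def case_prod_beta' .
  have "\<forall>\<^sub>F p in ?F. \<not> ?eq p"
  proof (cases "z i j * z k j' = z i j' * z k j")
    case True
    have "\<not> checkerboard (z i j) (z i j') (z k j) (z k j')"
    proof
      assume "checkerboard (z i j) (z i j') (z k j) (z k j')"
      then have "u = mixed_value_2x2 (limit_payoff i j) (limit_payoff i j') (limit_payoff k j) (limit_payoff k j')"
        using True unfolding z_def by (intro mixed_value_2x2_eq)
      then show False using u mixed_value_2x2_in_candidates[OF idx] by simp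
    qed
    then show ?thesis
      using signs idx equalizing_2x2_checkerboard_signs by (elim eventually_mono) blast
  next
    case False
    have N_tendsto: "((\<lambda>p. N p a b) \<longlongrightarrow> z a b) ?F" for a b
      using tendsto_normalized_entry unfolding N_def z_def case_prod_beta' .
    have "z a b \<noteq> 0" if "a < m" "b < n" for a b
      using limit_payoff_in_candidates[OF that] u unfolding z_def by auto
    then have "\<forall>\<^sub>F p in ?F. snd p ^ (vanishing_order i j + vanishing_order k j') * (N p i j * N p k j')
        \<noteq> snd p ^ (vanishing_order i j' + vanishing_order k j) * (N p i j' * N p k j)"
      using False idx signs tendsto_snd[OF tendsto_ident_prod_at_right] tendsto_mult[OF N_tendsto N_tendsto]
      by (intro eventually_ne_power_mult) (auto elim: eventually_mono)
    then show ?thesis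
      using equalizing_2x2_normalized_cross[OF _ idx] unfolding N_def by (elim eventually_mono) blast
  qed
  then show ?thesis by (simp add: case_prod_beta')
qed

lemma eventually_not_entry_or_2x2_value:
  assumes u: "u \<notin> candidates"
  shows "\<forall>\<^sub>F (v, l) in nhds u \<times>\<^sub>F at_right 0. \<not> entry_or_2x2_value m n (shapley_matrix l v) v"
proof -
  have "\<forall>\<^sub>F p in nhds u \<times>\<^sub>F at_right 0. \<forall>i\<in>{..<m}. \<forall>k\<in>{..<m}. \<forall>j\<in>{..<n}. \<forall>j'\<in>{..<n}.
      \<not> equalizing_2x2 (shapley_matrix (snd p) (fst p)) i k j j' (fst p)"
    using eventually_not_equalizing_2x2[OF u, unfolded case_prod_beta']
    by (intro eventually_ball_finite ballI finite_lessThan) auto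
  moreover note eventually_entry_signs[OF u, unfolded case_prod_beta']
  ultimately have "\<forall>\<^sub>F p in nhds u \<times>\<^sub>F at_right 0.
      \<not> entry_or_2x2_value m n (shapley_matrix (snd p) (fst p)) (fst p)"
  proof eventually_elim
    case (elim p)
    have "shapley_matrix (snd p) (fst p) i j \<noteq> fst p" if "i < m" "j < n" for i j
      using elim(2) that by fastforce
    then show ?case using elim(1) unfolding entry_or_2x2_value_def by blast
  qed
  then show ?thesis by (simp add: case_prod_beta')
qed

lemma entry_or_2x2_value_disc_val:
  assumes "0 < l" "l \<le> 1"
  shows "entry_or_2x2_value m n (shapley_matrix l (disc_val m n g q w l)) (disc_val m n g q w l)"
  using small_game_value[OF rows_pos columns_pos small] disc_val_fixed_point(1)[OF assms]
  by (metis shapley_eq_mval)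

lemma disc_val_avoids:
  assumes "u \<notin> candidates"
  shows "\<exists>\<eta>>0. \<forall>\<^sub>F l in at_right 0. \<eta> \<le> \<bar>disc_val m n g q w l - u\<bar>"
proof -
  obtain Pv Pl where Pv: "eventually Pv (nhds u)" and Pl: "eventually Pl (at_right 0)"
    and none: "\<And>v l. Pv v \<Longrightarrow> Pl l \<Longrightarrow> \<not> entry_or_2x2_value m n (shapley_matrix l v) v"
    using eventually_not_entry_or_2x2_value[OF assms] unfolding eventually_prod_filter by auto
  obtain \<eta> where "\<eta> > 0" and near: "\<forall>v. dist v u < \<eta> \<longrightarrow> Pv v"
    using Pv unfolding eventually_nhds_metric by auto
  have "\<forall>\<^sub>F l in at_right 0. 0 < l \<and> l \<le> (1::real)"
    unfolding eventually_at_right_field by (intro exI[of _ 1]) auto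
  with Pl have "\<forall>\<^sub>F l in at_right 0. \<eta> \<le> \<bar>disc_val m n g q w l - u\<bar>"
  proof eventually_elim
    case (elim l)
    then have "\<not> Pv (disc_val m n g q w l)"
      using none entry_or_2x2_value_disc_val by blast
    then show ?case using near by (auto simp: dist_real_def not_less)
  qed
  with \<open>\<eta> > 0\<close> show ?thesis by blast
qed

theorem tendsto_disc_val_candidate:
  "\<exists>c\<in>candidates. (disc_val m n g q w \<longlongrightarrow> c) (at_right 0)"
proof (rule tendsto_at_right_finite_set)
  show "continuous_on {0<..<1} (disc_val m n g q w)"
    using continuous_on_disc_val by (rule continuous_on_subset) auto
  have "\<forall>\<^sub>F l in at_right 0. 0 < l \<and> l \<le> (1::real)"
    unfolding eventually_at_right_field by (intro exI[of _ 1]) auto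
  then show "\<forall>\<^sub>F l in at_right 0. \<bar>disc_val m n g q w l\<bar> \<le> payoff_bound"
    by (rule eventually_mono) (use disc_val_fixed_point(2) in blast)
qed (use finite_candidates disc_val_avoids in auto)

end

theorem theorem1:
  fixes m n :: nat and g q w :: "nat \<Rightarrow> nat \<Rightarrow> real"
  assumes "m \<ge> 1" and "n \<ge> 1"
    and "\<forall>i<m. \<forall>j<n. g i j \<in> \<rat> \<and> q i j \<in> \<rat> \<and> w i j \<in> \<rat>"
    and "\<forall>i<m. \<forall>j<n. q i j = 0 \<or> q i j = 1"
    and "min m n < 3"
  shows "\<exists>v \<in> \<rat>. ((\<lambda>l. disc_val m n g q w l) \<longlongrightarrow> v) (at_right 0)"
proof -
  interpret deterministic_small_game m n g q w
    using assms by unfold_locales auto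
  obtain c where "c \<in> candidates" "(disc_val m n g q w \<longlongrightarrow> c) (at_right 0)"
    using tendsto_disc_val_candidate by blast
  moreover have "candidates \<subseteq> \<rat>" using candidates_rational assms(3) .
  ultimately show ?thesis by blast
qed

end
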